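(* Let $n$ be a power of $2$ and let $x\in\mathbb{R}^n$ be a Haar-random unit vector (equivalently, a vector with independent $N(0,1)$ coordinates, rescaled to unit norm). Then for any two distinct internal nodes $i,j$ of the binary data loader tree for $x$, the angles $\theta_i$ and $\theta_j$ stored at these nodes are independent random variables.
   Context: The binary data loader for $x\in\mathbb{R}^n$ uses a complete binary tree (binary heap indexing: node $j$ has left child $2j$ and right child $2j+1$) whose leaves correspond to the coordinates of $x$. Each node $j$ stores $r(j)$, the sum of the squares of the coordinates at the leaves of its subtree, and each internal node stores the angle $\theta_j=\arccos\sqrt{r(2j)/r(j)}$, so that $\cos^2\theta_j=r(2j)/r(j)$ and $\sin^2\theta_j=r(2j+1)/r(j)$. These angles are the rotation angles of two-qubit beam splitter gates in a logarithmic-depth circuit that prepares the amplitude encoding of $x$. *)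

theory Defs
  imports "HOL-Probability.Probability"
begin

text \<open>Binary data loader tree for a vector x in R^n (n a power of 2), heap indexing:
  nodes 1 .. 2n-1, node j has children 2j and 2j+1, the leaves are nodes n .. 2n-1,
  leaf l corresponding to coordinate x (l - n).\<close>

definition subtree_leaves :: "nat \<Rightarrow> nat \<Rightarrow> nat set" where
  "subtree_leaves n j = {l \<in> {n..<2*n}. \<exists>m. l div 2^m = j}"

definition loader_r :: "nat \<Rightarrow> (nat \<Rightarrow> real) \<Rightarrow> nat \<Rightarrow> real" where
  "loader_r n x j = (\<Sum>l\<in>subtree_leaves n j. (x (l - n))^2)"

definition loader_theta :: "nat \<Rightarrow> (nat \<Rightarrow> real) \<Rightarrow> nat \<Rightarrow> real" where
  "loader_theta n x j = arccos (sqrt (loader_r n x (2*j) / loader_r n x j))"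

definition gaussian_vec :: "nat \<Rightarrow> (nat \<Rightarrow> real) measure" where
  "gaussian_vec n = PiM {..<n} (\<lambda>_. density lborel std_normal_density)"

definition unit_normalize :: "nat \<Rightarrow> (nat \<Rightarrow> real) \<Rightarrow> (nat \<Rightarrow> real)" where
  "unit_normalize n g = (\<lambda>i. g i / sqrt (\<Sum>l<n. (g l)^2))"

end

theory Submission
  imports Defs
begin

text \<open>
  Let \<open>S\<close> be the set of coordinates below node \<open>j\<close>. Up to swapping \<open>i\<close> and \<open>j\<close>, the node \<open>j\<close>
  is not an ancestor of \<open>i\<close>; then the subtree of \<open>j\<close> is contained in or disjoint from each of the
  subtrees of \<open>i\<close> and \<open>2i\<close>. The normalisation cancels in the ratios defining the angles, so
  \<open>\<theta>\<^sub>i\<close> depends on the Gaussian vector \<open>g\<close> only through \<open>|g\<^sub>S|\<^sup>2\<close> and the coordinates outside \<open>S\<close>,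
  while \<open>\<theta>\<^sub>j\<close> is a scale-invariant function of \<open>g\<^sub>S\<close>.

  For a radial density on \<open>\<real>\<^sup>S\<close>, the squared norm is independent of every scale-invariant
  event \<open>E\<close>: by the homogeneity of Lebesgue measure, the Lebesgue law of \<open>|y|\<^sup>2\<close> on \<open>E\<close> is
  proportional to its law on all of \<open>\<real>\<^sup>S\<close>. Fubini over the coordinates outside \<open>S\<close> then gives the
  independence of \<open>\<theta>\<^sub>i\<close> and \<open>\<theta>\<^sub>j\<close>.
\<close>

interpretation lborel_product: product_sigma_finite "\<lambda>_::'i. lborel :: real measure"
  by standard

definition sqnorm :: "'i set \<Rightarrow> ('i \<Rightarrow> real) \<Rightarrow> real" where
  "sqnorm S y = (\<Sum>k\<in>S. (y k)\<^sup>2)"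

definition scale_on :: "'i set \<Rightarrow> real \<Rightarrow> ('i \<Rightarrow> real) \<Rightarrow> ('i \<Rightarrow> real)" where
  "scale_on S c y = (\<lambda>k\<in>S. c * y k)"

definition scaling_invariant :: "'i set \<Rightarrow> ('i \<Rightarrow> real) set \<Rightarrow> bool" where
  "scaling_invariant S E \<longleftrightarrow>
     (\<forall>y \<in> space (PiM S (\<lambda>_. lborel)). \<forall>c > 0. scale_on S c y \<in> E \<longleftrightarrow> y \<in> E)"

lemma scale_on_in_space: "scale_on S c y \<in> space (PiM S (\<lambda>_. lborel))"
  by (auto simp: scale_on_def space_PiM)

lemma scale_on_measurable: "scale_on S c \<in> measurable (PiM S (\<lambda>_. lborel)) (PiM S (\<lambda>_. lborel))"
  unfolding scale_on_def by (intro measurable_restrict) auto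

lemma sqnorm_nonneg: "0 \<le> sqnorm S y"
  unfolding sqnorm_def by (simp add: sum_nonneg)

lemma sqnorm_mono: "T \<subseteq> S \<Longrightarrow> finite S \<Longrightarrow> sqnorm T y \<le> sqnorm S y"
  unfolding sqnorm_def by (intro sum_mono2) auto

lemma sqnorm_cong: "(\<And>k. k \<in> S \<Longrightarrow> x k = y k) \<Longrightarrow> sqnorm S x = sqnorm S y"
  unfolding sqnorm_def by (auto intro!: sum.cong)

lemma sqnorm_restrict: "T \<subseteq> S \<Longrightarrow> sqnorm T (restrict y S) = sqnorm T y"
  by (rule sqnorm_cong) auto

lemma sqnorm_scale_on: "T \<subseteq> S \<Longrightarrow> sqnorm T (scale_on S c y) = c\<^sup>2 * sqnorm T y"
  unfolding sqnorm_def scale_on_def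
  by (auto simp: sum_distrib_left power_mult_distrib intro!: sum.cong)

lemma sqnorm_split_nested_or_disjoint:
  assumes "finite C" and "S \<subseteq> C \<or> C \<inter> S = {}"
  shows "sqnorm C y = of_bool (S \<subseteq> C) * sqnorm S y + sqnorm (C - S) y"
  using assms unfolding sqnorm_def by (auto simp: sum.subset_diff Diff_triv)

lemma borel_measurable_sqnorm:
  assumes "S \<subseteq> I" and "sets N = sets borel"
  shows "sqnorm S \<in> borel_measurable (PiM I (\<lambda>_. N))"
proof -
  have "(\<lambda>y. y k) \<in> borel_measurable (PiM I (\<lambda>_. N))" if "k \<in> I" for k
    using measurable_component_singleton[OF that, of "\<lambda>_. N"] assms(2)
    by (simp cong: measurable_cong_sets)
  then show ?thesis
    unfolding sqnorm_def using assms(1) by (intro borel_measurable_sum borel_measurable_power) auto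
qed

lemma sets_sqnorm_less:
  "S \<subseteq> I \<Longrightarrow> {y \<in> space (PiM I (\<lambda>_. lborel)). sqnorm S y < t} \<in> sets (PiM I (\<lambda>_. lborel))"
  using measurable_sets[OF borel_measurable_sqnorm, of S I lborel "{..<t}"] by (simp add: vimage_def Int_def conj_commute)

lemma emeasure_lborel_vimage_mult:
  fixes c :: real
  assumes "c > 0" and "A \<in> sets borel"
  shows "emeasure lborel ((*) c -` A) = ennreal (inverse c) * emeasure lborel A"
proof -
  have "distr lborel borel ((*) c) = density lborel (\<lambda>_. ennreal (inverse c))"
    using lborel_distr_mult[of c] assms(1) by simp
  then show ?thesis
    using emeasure_distr[of "(*) c" lborel borel A] assms(2) by (simp add: emeasure_density_const)
qed

lemma PiM_lborel_scale:
  fixes S :: "'i set"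
  assumes S: "finite S" and c: "c > 0"
  shows "density (distr (PiM S (\<lambda>_. lborel)) (PiM S (\<lambda>_. lborel)) (scale_on S c)) (\<lambda>_. ennreal (c ^ card S))
           = PiM S (\<lambda>_. lborel)"
    (is "density (distr ?L ?L _) _ = _")
proof (rule lborel_product.PiM_eqI[OF S])
  fix A assume A: "\<And>i. i \<in> S \<Longrightarrow> A i \<in> sets (lborel :: real measure)"
  have vimage_box: "scale_on S c -` Pi\<^sub>E S A \<inter> space ?L = Pi\<^sub>E S (\<lambda>k. (*) c -` A k)"
    by (auto simp: scale_on_def space_PiM PiE_def Pi_def extensional_def)
  have vimage_sets: "(*) c -` A k \<in> sets borel" if "k \<in> S" for k
    using measurable_sets[of "(*) c" borel borel "A k"] A[OF that] by simp
  have "emeasure (density (distr ?L ?L (scale_on S c)) (\<lambda>_. ennreal (c ^ card S))) (Pi\<^sub>E S A)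
      = ennreal (c ^ card S) * (\<Prod>k\<in>S. ennreal (inverse c) * emeasure lborel (A k))"
    using A S c vimage_sets
    by (simp add: emeasure_density_const emeasure_distr scale_on_measurable vimage_box
        sets_PiM_I_finite lborel_product.emeasure_PiM emeasure_lborel_vimage_mult)
  also have "\<dots> = (\<Prod>k\<in>S. emeasure lborel (A k))"
  proof -
    have "ennreal (c ^ card S) * ennreal (inverse c) ^ card S = 1"
      using c by (simp add: ennreal_power ennreal_mult''[symmetric] power_mult_distrib[symmetric])
    then show ?thesis
      by (simp add: prod.distrib mult.assoc[symmetric])
  qed
  finally show "emeasure (density (distr ?L ?L (scale_on S c)) (\<lambda>_. ennreal (c ^ card S))) (Pi\<^sub>E S A)
      = (\<Prod>k\<in>S. emeasure lborel (A k))" .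
qed simp

lemma emeasure_PiM_lborel_scale:
  fixes S :: "'i set"
  assumes S: "finite S" and c: "c > 0" and X: "X \<in> sets (PiM S (\<lambda>_. lborel))"
  shows "emeasure (PiM S (\<lambda>_. lborel)) X
           = ennreal (c ^ card S) * emeasure (PiM S (\<lambda>_. lborel)) (scale_on S c -` X \<inter> space (PiM S (\<lambda>_. lborel)))"
  using X by (subst (1) PiM_lborel_scale[OF S c, symmetric])
    (simp add: emeasure_density_const emeasure_distr scale_on_measurable)

lemma emeasure_sqnorm_less_1_finite:
  fixes S :: "'i set"
  assumes S: "finite S"
  shows "emeasure (PiM S (\<lambda>_. lborel)) {y \<in> space (PiM S (\<lambda>_. lborel)). sqnorm S y < 1} < \<infinity>"
proof -
  let ?L = "PiM S (\<lambda>_. lborel :: real measure)"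
  have "{y \<in> space ?L. sqnorm S y < 1} \<subseteq> Pi\<^sub>E S (\<lambda>_. {-1..1})"
  proof safe
    fix y k assume y: "y \<in> space ?L" "sqnorm S y < 1" and k: "k \<in> S"
    have "(y k)\<^sup>2 \<le> sqnorm S y"
      unfolding sqnorm_def using S k by (intro member_le_sum) auto
    then have "\<bar>y k\<bar> \<le> 1"
      using y(2) abs_square_le_1[of "y k"] by simp
    then show "y k \<in> {-1..1}"
      by (simp add: abs_le_iff)
  qed (auto simp: space_PiM)
  then have "emeasure ?L {y \<in> space ?L. sqnorm S y < 1} \<le> emeasure ?L (Pi\<^sub>E S (\<lambda>_. {-1..1}))"
    using S by (intro emeasure_mono) (auto intro!: sets_PiM_I_finite)
  also have "\<dots> = 2 ^ card S"
    using S by (simp add: lborel_product.emeasure_PiM)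
  finally show ?thesis
    by (simp add: order.strict_trans1 power_less_top_ennreal)
qed

lemma emeasure_sqnorm_less_1_pos:
  fixes S :: "'i set"
  assumes S: "finite S"
  shows "emeasure (PiM S (\<lambda>_. lborel)) {y \<in> space (PiM S (\<lambda>_. lborel)). sqnorm S y < 1} > 0"
proof -
  let ?L = "PiM S (\<lambda>_. lborel :: real measure)"
  define r :: real where "r = 1 / (card S + 1)"
  have r: "0 < r" "r \<le> 1" "card S * r < 1"
    unfolding r_def by (auto simp: field_simps)
  have "Pi\<^sub>E S (\<lambda>_. {-r..r}) \<subseteq> {y \<in> space ?L. sqnorm S y < 1}"
  proof safe
    fix y assume y: "y \<in> Pi\<^sub>E S (\<lambda>_. {-r..r})"
    have "(y k)\<^sup>2 \<le> r" if "k \<in> S" for k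
    proof -
      have "\<bar>y k\<bar> \<le> r" using y that by (force simp: abs_le_iff)
      then have "(y k)\<^sup>2 \<le> r\<^sup>2" by (metis abs_ge_zero power2_abs power_mono)
      also have "\<dots> \<le> r" using r by (simp add: power2_eq_square mult_left_le)
      finally show ?thesis .
    qed
    then have "sqnorm S y \<le> card S * r"
      unfolding sqnorm_def using sum_bounded_above[of S "\<lambda>k. (y k)\<^sup>2" r] by simp
    then show "sqnorm S y < 1" using r by linarith
  qed (auto simp: space_PiM)
  then have "emeasure ?L (Pi\<^sub>E S (\<lambda>_. {-r..r})) \<le> emeasure ?L {y \<in> space ?L. sqnorm S y < 1}"
    by (intro emeasure_mono sets_sqnorm_less) auto
  moreover have "emeasure ?L (Pi\<^sub>E S (\<lambda>_. {-r..r})) > 0"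
    using S r by (simp add: lborel_product.emeasure_PiM ennreal_power)
  ultimately show ?thesis by order
qed

lemma scaling_invariant_space: "scaling_invariant S (space (PiM S (\<lambda>_. lborel)))"
  by (simp add: scaling_invariant_def scale_on_in_space)

lemma emeasure_scaling_invariant_sqnorm_less:
  fixes S :: "'i set"
  assumes S: "finite S" and E: "E \<in> sets (PiM S (\<lambda>_. lborel))" and inv: "scaling_invariant S E"
  shows "emeasure (PiM S (\<lambda>_. lborel)) (E \<inter> {y \<in> space (PiM S (\<lambda>_. lborel)). sqnorm S y < t})
    = (if 0 < t then ennreal (sqrt t ^ card S) else 0)
      * emeasure (PiM S (\<lambda>_. lborel)) (E \<inter> {y \<in> space (PiM S (\<lambda>_. lborel)). sqnorm S y < 1})"
proof (cases "0 < t")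
  case t: True
  let ?L = "PiM S (\<lambda>_. lborel :: real measure)"
  have "sqnorm S (scale_on S (sqrt t) y) < t \<longleftrightarrow> sqnorm S y < 1" for y
    using t by (simp add: sqnorm_scale_on)
  then have "scale_on S (sqrt t) -` (E \<inter> {y \<in> space ?L. sqnorm S y < t}) \<inter> space ?L
      = E \<inter> {y \<in> space ?L. sqnorm S y < 1}"
    using inv t scale_on_in_space unfolding scaling_invariant_def by auto
  moreover have "E \<inter> {y \<in> space ?L. sqnorm S y < t} \<in> sets ?L"
    using E sets_sqnorm_less[of S S t] by blast
  ultimately show ?thesis
    using emeasure_PiM_lborel_scale[OF S, of "sqrt t"] t by simp
next
  case False
  then have "{y. sqnorm S y < t} = {}"
    using sqnorm_nonneg[of S] by (auto simp: not_less intro: order_trans)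
  then show ?thesis
    using False by (simp add: Collect_conj_eq)
qed

lemma emeasure_distr_sqnorm_lessThan:
  fixes S :: "'i set"
  assumes S: "finite S" and E: "E \<in> sets (PiM S (\<lambda>_. lborel))" and inv: "scaling_invariant S E"
  defines "L \<equiv> PiM S (\<lambda>_. lborel :: real measure)"
  shows "emeasure (distr (density L (indicator E)) borel (sqnorm S)) {..<t}
           = (if 0 < t then ennreal (sqrt t ^ card S) else 0) * emeasure L (E \<inter> {y \<in> space L. sqnorm S y < 1})"
proof -
  have "sqnorm S \<in> borel_measurable (density L (indicator E))"
    unfolding L_def by (simp add: borel_measurable_sqnorm)
  then have "emeasure (distr (density L (indicator E)) borel (sqnorm S)) {..<t}
      = emeasure (density L (indicator E)) {y \<in> space L. sqnorm S y < t}"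
    by (simp add: emeasure_distr vimage_def Int_def conj_commute)
  also have "\<dots> = emeasure L (E \<inter> {y \<in> space L. sqnorm S y < t})"
    using E sets_sqnorm_less[of S S t] unfolding L_def by (simp add: emeasure_restricted)
  finally show ?thesis
    using emeasure_scaling_invariant_sqnorm_less[OF S E inv, of t] unfolding L_def by simp
qed

lemma distr_sqnorm_scaling_invariant:
  fixes S :: "'i set"
  assumes S: "finite S" and E: "E \<in> sets (PiM S (\<lambda>_. lborel))" and inv: "scaling_invariant S E"
  defines "L \<equiv> PiM S (\<lambda>_. lborel :: real measure)"
  defines "B \<equiv> {y \<in> space L. sqnorm S y < 1}"
  shows "distr (density L (indicator E)) borel (sqnorm S)
           = density (distr L borel (sqnorm S)) (\<lambda>_. emeasure L (E \<inter> B) / emeasure L B)"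
proof -
  let ?r = "\<lambda>t. if 0 < t then ennreal (sqrt t ^ card S) else 0"
  have B_pos: "emeasure L B > 0" and B_fin: "emeasure L B < \<infinity>"
    unfolding L_def B_def using S emeasure_sqnorm_less_1_pos emeasure_sqnorm_less_1_finite by auto
  have "emeasure L (E \<inter> B) \<le> emeasure L B"
    using sets_sqnorm_less[of S S 1] unfolding L_def B_def by (intro emeasure_mono) auto
  then have E_fin: "emeasure L (E \<inter> B) < \<infinity>"
    using B_fin by order
  have "density L (indicator (space L)) = density L (\<lambda>_. 1)"
    by (intro density_cong) auto
  then have L_eq: "density L (indicator (space L)) = L"
    by (simp add: density_1)
  have lhs: "emeasure (distr (density L (indicator E)) borel (sqnorm S)) {..<t} = ?r t * emeasure L (E \<inter> B)" for t
    using emeasure_distr_sqnorm_lessThan[OF S E inv] unfolding L_def B_def .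
  have rhs: "emeasure (density (distr L borel (sqnorm S)) (\<lambda>_. emeasure L (E \<inter> B) / emeasure L B)) {..<t}
      = ?r t * emeasure L (E \<inter> B)" for t
  proof -
    have "emeasure (distr L borel (sqnorm S)) {..<t} = ?r t * emeasure L B"
      using emeasure_distr_sqnorm_lessThan[OF S sets.top scaling_invariant_space, of t]
      unfolding L_def[symmetric] B_def[symmetric] L_eq by (simp add: B_def Int_absorb1)
    moreover have "emeasure L (E \<inter> B) / emeasure L B * emeasure L B = emeasure L (E \<inter> B)"
      using B_pos B_fin by (simp add: ennreal_divide_times ennreal_divide_self)
    ultimately show ?thesis
      by (simp add: emeasure_density_const mult.left_commute)
  qed
  show ?thesis
  proof (rule measure_eqI_generator_eq_countable[where E="range lessThan" and \<Omega>=UNIV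
        and A="range (\<lambda>k::nat. {..<real k})"])
    show "Int_stable (range (lessThan :: real \<Rightarrow> real set))"
      by (auto simp: Int_stable_def greaterThan_Int_greaterThan)
    show "\<Union> (range (\<lambda>k::nat. {..<real k})) = UNIV"
      by (auto intro: reals_Archimedean2)
    fix X assume "X \<in> range (\<lambda>k::nat. {..<real k})"
    then show "emeasure (distr (density L (indicator E)) borel (sqnorm S)) X \<noteq> \<infinity>"
      using E_fin by (auto simp: lhs ennreal_mult_eq_top_iff split: if_splits)
  next
    fix X :: "real set" assume "X \<in> range lessThan"
    then show "emeasure (distr (density L (indicator E)) borel (sqnorm S)) X
        = emeasure (density (distr L borel (sqnorm S)) (\<lambda>_. emeasure L (E \<inter> B) / emeasure L B)) X"
      by (auto simp: lhs rhs)
  qed (auto simp: borel_Iio)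
qed

lemma emeasure_radial_density_eq_nn_integral:
  fixes S :: "'i set" and \<psi> :: "real \<Rightarrow> ennreal"
  assumes \<psi>: "\<psi> \<in> borel_measurable borel"
    and E: "E \<in> sets (PiM S (\<lambda>_. lborel))" and D: "D \<in> sets borel"
  defines "L \<equiv> PiM S (\<lambda>_. lborel :: real measure)"
  shows "emeasure (density L (\<lambda>y. \<psi> (sqnorm S y))) (E \<inter> {y \<in> space L. sqnorm S y \<in> D})
    = (\<integral>\<^sup>+ q. \<psi> q * indicator D q \<partial>distr (density L (indicator E)) borel (sqnorm S))"
proof -
  have sqnorm_meas: "sqnorm S \<in> borel_measurable L"
    unfolding L_def by (rule borel_measurable_sqnorm) auto
  have "E \<inter> {y \<in> space L. sqnorm S y \<in> D} = E \<inter> (sqnorm S -` D \<inter> space L)"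
    by blast
  also have "\<dots> \<in> sets L"
    using E D sqnorm_meas unfolding L_def by (intro sets.Int measurable_sets) auto
  finally have ED: "E \<inter> {y \<in> space L. sqnorm S y \<in> D} \<in> sets L" .
  have "emeasure (density L (\<lambda>y. \<psi> (sqnorm S y))) (E \<inter> {y \<in> space L. sqnorm S y \<in> D})
      = (\<integral>\<^sup>+ y. indicator E y * (\<psi> (sqnorm S y) * indicator D (sqnorm S y)) \<partial>L)"
    using ED \<psi> sqnorm_meas
    by (subst emeasure_density) (auto intro!: nn_integral_cong simp: indicator_def)
  also have "\<dots> = (\<integral>\<^sup>+ y. \<psi> (sqnorm S y) * indicator D (sqnorm S y) \<partial>density L (indicator E))"
    using E D \<psi> sqnorm_meas unfolding L_def by (subst nn_integral_density) auto
  also have "\<dots> = (\<integral>\<^sup>+ q. \<psi> q * indicator D q \<partial>distr (density L (indicator E)) borel (sqnorm S))"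
    using D \<psi> sqnorm_meas by (subst nn_integral_distr) auto
  finally show ?thesis .
qed

lemma emeasure_radial_density_Int_sqnorm:
  fixes S :: "'i set" and \<psi> :: "real \<Rightarrow> ennreal"
  assumes S: "finite S" and \<psi>: "\<psi> \<in> borel_measurable borel"
    and prob: "prob_space (density (PiM S (\<lambda>_. lborel)) (\<lambda>y. \<psi> (sqnorm S y)))"
    and E: "E \<in> sets (PiM S (\<lambda>_. lborel))" and inv: "scaling_invariant S E" and D: "D \<in> sets borel"
  defines "M \<equiv> density (PiM S (\<lambda>_. lborel)) (\<lambda>y. \<psi> (sqnorm S y))"
  shows "emeasure M (E \<inter> {y \<in> space M. sqnorm S y \<in> D})
           = emeasure M E * emeasure M {y \<in> space M. sqnorm S y \<in> D}"
proof -
  let ?L = "PiM S (\<lambda>_. lborel :: real measure)"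
  let ?B = "{y \<in> space ?L. sqnorm S y < 1}"
  define I where "I D' = (\<integral>\<^sup>+ q. \<psi> q * indicator D' q \<partial>distr ?L borel (sqnorm S))" for D'
  define c where "c E' = emeasure ?L (E' \<inter> ?B) / emeasure ?L ?B" for E'
  have radial: "emeasure M (E' \<inter> {y \<in> space M. sqnorm S y \<in> D'}) = c E' * I D'"
    if E': "E' \<in> sets ?L" "scaling_invariant S E'" and D': "D' \<in> sets borel" for E' D'
    using E' D' \<psi> unfolding M_def I_def c_def
    by (simp add: emeasure_radial_density_eq_nn_integral distr_sqnorm_scaling_invariant[OF S]
        nn_integral_density nn_integral_cmult)
  have "E \<inter> {y \<in> space M. sqnorm S y \<in> UNIV} = E"
    using sets.sets_into_space[OF E] by (auto simp: M_def)
  then have ME: "emeasure M E = c E * I UNIV"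
    using radial[OF E inv, of UNIV] by simp
  have MD: "emeasure M {y \<in> space M. sqnorm S y \<in> D} = c (space ?L) * I D"
    using radial[OF _ scaling_invariant_space D] by (simp add: M_def Int_absorb1)
  have "c (space ?L) * I UNIV = emeasure M (space M)"
    using radial[OF _ scaling_invariant_space, of UNIV] by (simp add: M_def)
  also have "\<dots> = 1"
    unfolding M_def by (rule prob_space.emeasure_space_1[OF prob])
  finally have "c (space ?L) * I UNIV = 1" .
  then have "emeasure M E * emeasure M {y \<in> space M. sqnorm S y \<in> D} = c E * I D"
    unfolding ME MD by (metis mult.assoc mult.commute mult_1_right)
  then show ?thesis
    using radial[OF E inv D] by simp
qed

abbreviation std_normal_measure :: "real measure" where
  "std_normal_measure \<equiv> density lborel std_normal_density"

lemma prob_space_std_normal_measure: "prob_space std_normal_measure"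
  by (rule prob_space_normal_density) simp

interpretation std_normal_product: product_sigma_finite "\<lambda>_::'i. std_normal_measure"
  unfolding product_sigma_finite_def
  using prob_space_std_normal_measure by (auto intro: prob_space_imp_sigma_finite)

lemma prob_space_PiM_std_normal: "prob_space (PiM I (\<lambda>_. std_normal_measure))"
  by (intro prob_space_PiM prob_space_std_normal_measure)

lemma measurable_restrict_std_normal:
  "S \<subseteq> I \<Longrightarrow> (\<lambda>g. restrict g S) \<in> measurable (PiM I (\<lambda>_. std_normal_measure)) (PiM S (\<lambda>_. lborel))"
  using measurable_restrict_subset[of S I "\<lambda>_. std_normal_measure"]
  by (simp cong: measurable_cong_sets sets_PiM_cong)

lemma PiM_std_normal_eq_radial_density:
  fixes S :: "'i set"
  assumes S: "finite S"
  shows "PiM S (\<lambda>_. std_normal_measure)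
           = density (PiM S (\<lambda>_. lborel)) (\<lambda>y. ennreal (exp (- sqnorm S y / 2) / sqrt (2 * pi) ^ card S))"
    (is "_ = density ?L ?\<psi>")
proof (rule std_normal_product.PiM_eqI[symmetric, OF S])
  fix A assume A: "\<And>i. i \<in> S \<Longrightarrow> A i \<in> sets std_normal_measure"
  then have A_borel: "\<And>i. i \<in> S \<Longrightarrow> A i \<in> sets borel" by simp
  have "(\<lambda>q. ennreal (exp (- q / 2) / sqrt (2 * pi) ^ card S)) \<in> borel_measurable borel"
    by measurable
  from measurable_compose[OF borel_measurable_sqnorm[of S S lborel] this]
  have "?\<psi> \<in> borel_measurable ?L" by simp
  then have "emeasure (density ?L ?\<psi>) (Pi\<^sub>E S A) = (\<integral>\<^sup>+ y. ?\<psi> y * indicator (Pi\<^sub>E S A) y \<partial>?L)"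
    using A_borel S by (intro emeasure_density sets_PiM_I_finite) auto
  also have "\<dots> = (\<integral>\<^sup>+ y. (\<Prod>k\<in>S. ennreal (std_normal_density (y k)) * indicator (A k) (y k)) \<partial>?L)"
  proof (rule nn_integral_cong)
    fix y :: "'i \<Rightarrow> real" assume "y \<in> space ?L"
    then have "indicator (Pi\<^sub>E S A) y = (\<Prod>k\<in>S. indicator (A k) (y k) :: ennreal)"
      using S by (auto simp: indicator_def space_PiM PiE_def Pi_def)
    moreover have "?\<psi> y = (\<Prod>k\<in>S. ennreal (std_normal_density (y k)))"
      using S by (simp add: prod_ennreal normal_density_nonneg std_normal_density_def sqnorm_def
          prod_dividef exp_sum[symmetric] sum_negf sum_divide_distrib)
    ultimately show "?\<psi> y * indicator (Pi\<^sub>E S A) y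
        = (\<Prod>k\<in>S. ennreal (std_normal_density (y k)) * indicator (A k) (y k))"
      by (simp add: prod.distrib)
  qed
  also have "\<dots> = (\<Prod>k\<in>S. \<integral>\<^sup>+ x. ennreal (std_normal_density x) * indicator (A k) x \<partial>lborel)"
    using A_borel by (intro lborel_product.product_nn_integral_prod S) auto
  also have "\<dots> = (\<Prod>k\<in>S. emeasure std_normal_measure (A k))"
    using A_borel by (intro prod.cong refl) (simp add: emeasure_density)
  finally show "emeasure (density ?L ?\<psi>) (Pi\<^sub>E S A) = (\<Prod>k\<in>S. emeasure std_normal_measure (A k))" .
qed (simp cong: sets_PiM_cong)

lemma emeasure_PiM_std_normal_sqnorm_scaling_invariant:
  fixes S :: "'i set"
  assumes S: "finite S" and k: "k \<in> measurable borel N1" and f: "f \<in> measurable (PiM S (\<lambda>_. lborel)) N2"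
    and f_inv: "\<And>c y. c > 0 \<Longrightarrow> y \<in> space (PiM S (\<lambda>_. lborel)) \<Longrightarrow> f (scale_on S c y) = f y"
    and A: "A \<in> sets N1" and B: "B \<in> sets N2"
  defines "G \<equiv> PiM S (\<lambda>_. std_normal_measure)"
  shows "emeasure G {y \<in> space G. k (sqnorm S y) \<in> A \<and> f y \<in> B}
           = emeasure G {y \<in> space G. k (sqnorm S y) \<in> A} * emeasure G {y \<in> space G. f y \<in> B}"
proof -
  let ?E = "f -` B \<inter> space (PiM S (\<lambda>_. lborel))" and ?D = "k -` A \<inter> space borel"
  have \<psi>: "(\<lambda>q. ennreal (exp (- q / 2) / sqrt (2 * pi) ^ card S)) \<in> borel_measurable borel"
    by measurable
  have "prob_space (density (PiM S (\<lambda>_. lborel))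
      (\<lambda>y. ennreal (exp (- sqnorm S y / 2) / sqrt (2 * pi) ^ card S)))"
    using prob_space_PiM_std_normal[of S] unfolding PiM_std_normal_eq_radial_density[OF S] .
  moreover have "?E \<in> sets (PiM S (\<lambda>_. lborel))"
    using f B by (rule measurable_sets)
  moreover have "scaling_invariant S ?E"
    unfolding scaling_invariant_def using f_inv scale_on_in_space by auto
  moreover have "?D \<in> sets borel"
    using k A by (rule measurable_sets)
  ultimately have prod: "emeasure G (?E \<inter> {y \<in> space G. sqnorm S y \<in> ?D})
      = emeasure G ?E * emeasure G {y \<in> space G. sqnorm S y \<in> ?D}"
    using emeasure_radial_density_Int_sqnorm[OF S \<psi>]
    unfolding G_def PiM_std_normal_eq_radial_density[OF S] by blast
  have "space G = space (PiM S (\<lambda>_. lborel))"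
    unfolding G_def by (simp add: space_PiM)
  then have E_eq: "?E = {y \<in> space G. f y \<in> B}"
    and D_eq: "{y \<in> space G. sqnorm S y \<in> ?D} = {y \<in> space G. k (sqnorm S y) \<in> A}"
    by auto
  have "?E \<inter> {y \<in> space G. sqnorm S y \<in> ?D} = {y \<in> space G. k (sqnorm S y) \<in> A \<and> f y \<in> B}"
    unfolding E_eq D_eq by blast
  with prod show ?thesis
    unfolding E_eq D_eq by (simp only: mult.commute)
qed

lemma (in prob_space) indep_varI_emeasure:
  assumes X: "random_variable N1 X" and Y: "random_variable N2 Y"
    and prod: "\<And>A B. A \<in> sets N1 \<Longrightarrow> B \<in> sets N2 \<Longrightarrow>
      emeasure M {\<omega> \<in> space M. X \<omega> \<in> A \<and> Y \<omega> \<in> B}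
        = emeasure M {\<omega> \<in> space M. X \<omega> \<in> A} * emeasure M {\<omega> \<in> space M. Y \<omega> \<in> B}"
  shows "indep_var N1 X N2 Y"
  unfolding indep_var_distribution_eq
proof (intro conjI X Y pair_measure_eqI)
  show "sigma_finite_measure (distr M N1 X)" "sigma_finite_measure (distr M N2 Y)"
    using X Y by (auto intro!: prob_space_imp_sigma_finite prob_space_distr)
  have XY: "(\<lambda>\<omega>. (X \<omega>, Y \<omega>)) \<in> measurable M (N1 \<Otimes>\<^sub>M N2)"
    using X Y by (rule measurable_Pair)
  fix A B assume "A \<in> sets (distr M N1 X)" "B \<in> sets (distr M N2 Y)"
  then have A: "A \<in> sets N1" and B: "B \<in> sets N2" by auto
  have "emeasure (distr M N1 X) A * emeasure (distr M N2 Y) B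
      = emeasure M {\<omega> \<in> space M. X \<omega> \<in> A} * emeasure M {\<omega> \<in> space M. Y \<omega> \<in> B}"
    using A B X Y by (simp add: emeasure_distr vimage_def Int_def conj_commute)
  also have "\<dots> = emeasure (distr M (N1 \<Otimes>\<^sub>M N2) (\<lambda>\<omega>. (X \<omega>, Y \<omega>))) (A \<times> B)"
    using A B XY by (simp add: emeasure_distr prod vimage_def Int_def conj_commute)
  finally show "emeasure (distr M N1 X) A * emeasure (distr M N2 Y) B
      = emeasure (distr M (N1 \<Otimes>\<^sub>M N2) (\<lambda>\<omega>. (X \<omega>, Y \<omega>))) (A \<times> B)" .
qed (simp cong: sets_pair_measure_cong)

lemma (in prob_space) indep_var_commute:
  assumes "indep_var N1 X N2 Y"
  shows "indep_var N2 Y N1 X"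
proof (rule indep_varI_emeasure)
  show "random_variable N2 Y" "random_variable N1 X"
    using assms by (auto dest: indep_var_rv1 indep_var_rv2)
  fix B A assume "B \<in> sets N2" "A \<in> sets N1"
  then show "emeasure M {\<omega> \<in> space M. Y \<omega> \<in> B \<and> X \<omega> \<in> A}
      = emeasure M {\<omega> \<in> space M. Y \<omega> \<in> B} * emeasure M {\<omega> \<in> space M. X \<omega> \<in> A}"
    using indep_varD[OF assms, of A B] by (simp add: conj_commute mult.commute vimage_def Int_def emeasure_eq_measure ennreal_mult'' )
qed

lemma vimage_merge_restrict:
  assumes TS: "T \<inter> S = {}" and x: "x \<in> space (PiM T M)"
  shows "(\<lambda>y. merge T S (x, y)) -` {g \<in> space (PiM (T \<union> S) M). P (restrict g T) (restrict g S)}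
           \<inter> space (PiM S M) = {y \<in> space (PiM S M). P x y}"
proof -
  have "merge T S (x, y) \<in> space (PiM (T \<union> S) M)"
    and "restrict (merge T S (x, y)) T = x" "restrict (merge T S (x, y)) S = y"
    if "y \<in> space (PiM S M)" for y
    using x that TS by (auto simp: space_PiM merge_def PiE_def extensional_def fun_eq_iff)
  then show ?thesis by auto
qed

lemma (in product_sigma_finite) emeasure_PiM_slices_cmult:
  assumes TS: "T \<inter> S = {}" "finite T" "finite S"
    and P: "{g \<in> space (PiM (T \<union> S) M). P (restrict g T) (restrict g S)} \<in> sets (PiM (T \<union> S) M)"
    and Q: "{g \<in> space (PiM (T \<union> S) M). Q (restrict g T) (restrict g S)} \<in> sets (PiM (T \<union> S) M)"
    and slices: "\<And>x. x \<in> space (PiM T M) \<Longrightarrow>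
      emeasure (PiM S M) {y \<in> space (PiM S M). P x y} = c * emeasure (PiM S M) {y \<in> space (PiM S M). Q x y}"
  shows "emeasure (PiM (T \<union> S) M) {g \<in> space (PiM (T \<union> S) M). P (restrict g T) (restrict g S)}
           = c * emeasure (PiM (T \<union> S) M) {g \<in> space (PiM (T \<union> S) M). Q (restrict g T) (restrict g S)}"
proof -
  have fubini: "emeasure (PiM (T \<union> S) M) {g \<in> space (PiM (T \<union> S) M). R (restrict g T) (restrict g S)}
      = (\<integral>\<^sup>+ x. emeasure (PiM S M) {y \<in> space (PiM S M). R x y} \<partial>PiM T M)"
    and fubini_meas: "(\<lambda>x. emeasure (PiM S M) {y \<in> space (PiM S M). R x y}) \<in> borel_measurable (PiM T M)"
    if "{g \<in> space (PiM (T \<union> S) M). R (restrict g T) (restrict g S)} \<in> sets (PiM (T \<union> S) M)" for R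
  proof -
    have slice: "(\<lambda>y. merge T S (x, y)) -` {g \<in> space (PiM (T \<union> S) M). R (restrict g T) (restrict g S)}
        \<inter> space (PiM S M) = {y \<in> space (PiM S M). R x y}" if "x \<in> space (PiM T M)" for x
      using vimage_merge_restrict[OF TS(1) that] .
    show "emeasure (PiM (T \<union> S) M) {g \<in> space (PiM (T \<union> S) M). R (restrict g T) (restrict g S)}
        = (\<integral>\<^sup>+ x. emeasure (PiM S M) {y \<in> space (PiM S M). R x y} \<partial>PiM T M)"
      unfolding emeasure_fold_integral[OF TS that] by (intro nn_integral_cong) (simp only: slice)
    show "(\<lambda>x. emeasure (PiM S M) {y \<in> space (PiM S M). R x y}) \<in> borel_measurable (PiM T M)"
      using emeasure_fold_measurable[OF TS that] by (rule measurable_cong[THEN iffD1, rotated]) (simp only: slice)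
  qed
  show ?thesis
    using P Q slices by (simp add: fubini fubini_meas nn_integral_cmult[symmetric] cong: nn_integral_cong)
qed

lemma emeasure_PiM_std_normal_factor_scaling_invariant:
  fixes I S :: "'i set"
  assumes I: "finite I" and SI: "S \<subseteq> I"
    and h: "h \<in> measurable (borel \<Otimes>\<^sub>M PiM (I - S) (\<lambda>_. std_normal_measure)) N1"
    and f: "f \<in> measurable (PiM S (\<lambda>_. lborel)) N2"
    and f_inv: "\<And>c y. c > 0 \<Longrightarrow> y \<in> space (PiM S (\<lambda>_. lborel)) \<Longrightarrow> f (scale_on S c y) = f y"
    and A: "A \<in> sets N1" and B: "B \<in> sets N2"
  defines "G \<equiv> PiM I (\<lambda>_. std_normal_measure)" and "GS \<equiv> PiM S (\<lambda>_. std_normal_measure)"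
  defines "X C \<equiv> {g \<in> space G. h (sqnorm S (restrict g S), restrict g (I - S)) \<in> A \<and> f (restrict g S) \<in> C}"
  shows "emeasure G (X B) = emeasure GS {y \<in> space GS. f y \<in> B} * emeasure G (X (space N2))"
proof -
  define T where "T = I - S"
  have TS: "T \<inter> S = {}" "finite T" "finite S" and I_eq: "T \<union> S = I"
    using SI I finite_subset unfolding T_def by auto
  have "(\<lambda>g. h (sqnorm S (restrict g S), restrict g T)) = (\<lambda>g. h (sqnorm S g, restrict g T))"
    by (simp add: sqnorm_restrict)
  also have "\<dots> \<in> measurable G N1"
    unfolding T_def G_def
    by (intro measurable_compose[OF _ h] measurable_Pair borel_measurable_sqnorm SI
        measurable_restrict_subset) auto
  finally have H_meas: "(\<lambda>g. h (sqnorm S (restrict g S), restrict g T)) \<in> measurable G N1" .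
  have f_meas: "f \<in> measurable GS N2"
    using f unfolding GS_def by (simp cong: measurable_cong_sets sets_PiM_cong)
  have F_meas: "(\<lambda>g. f (restrict g S)) \<in> measurable G N2"
    unfolding G_def by (intro measurable_compose[OF _ f] measurable_restrict_std_normal SI)
  have X_sets: "X C \<in> sets G" if "C \<in> sets N2" for C
  proof -
    have "X C = ((\<lambda>g. h (sqnorm S (restrict g S), restrict g T)) -` A \<inter> space G)
        \<inter> ((\<lambda>g. f (restrict g S)) -` C \<inter> space G)"
      unfolding X_def T_def by blast
    then show ?thesis
      using measurable_sets[OF H_meas A] measurable_sets[OF F_meas that] by simp
  qed
  have "emeasure G {g \<in> space G. h (sqnorm S (restrict g S), restrict g T) \<in> A \<and> f (restrict g S) \<in> B}
      = emeasure GS {y \<in> space GS. f y \<in> B}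
        * emeasure G {g \<in> space G. h (sqnorm S (restrict g S), restrict g T) \<in> A \<and> f (restrict g S) \<in> space N2}"
  proof (rule std_normal_product.emeasure_PiM_slices_cmult[OF TS, unfolded I_eq, folded G_def GS_def,
        where P="\<lambda>x y. h (sqnorm S y, x) \<in> A \<and> f y \<in> B"
          and Q="\<lambda>x y. h (sqnorm S y, x) \<in> A \<and> f y \<in> space N2"])
    show "{g \<in> space G. h (sqnorm S (restrict g S), restrict g T) \<in> A \<and> f (restrict g S) \<in> B} \<in> sets G"
      "{g \<in> space G. h (sqnorm S (restrict g S), restrict g T) \<in> A \<and> f (restrict g S) \<in> space N2} \<in> sets G"
      using X_sets[OF B] X_sets[OF sets.top] unfolding X_def T_def .
    fix x assume x: "x \<in> space (PiM T (\<lambda>_. std_normal_measure))"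
    have split: "emeasure GS {y \<in> space GS. h (sqnorm S y, x) \<in> A \<and> f y \<in> C}
        = emeasure GS {y \<in> space GS. h (sqnorm S y, x) \<in> A} * emeasure GS {y \<in> space GS. f y \<in> C}"
      if "C \<in> sets N2" for C
      using emeasure_PiM_std_normal_sqnorm_scaling_invariant[OF TS(3) _ f f_inv A that]
        measurable_Pair1[OF h[folded T_def] x] unfolding GS_def by simp
    have "{y \<in> space GS. f y \<in> space N2} = space GS"
      using f_meas by (auto simp: measurable_space)
    then show "emeasure GS {y \<in> space GS. h (sqnorm S y, x) \<in> A \<and> f y \<in> B}
        = emeasure GS {y \<in> space GS. f y \<in> B}
          * emeasure GS {y \<in> space GS. h (sqnorm S y, x) \<in> A \<and> f y \<in> space N2}"
      using split[OF B] split[OF sets.top] prob_space.emeasure_space_1[OF prob_space_PiM_std_normal[of S]]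
      unfolding GS_def by (simp add: mult.commute)
  qed
  then show ?thesis
    unfolding X_def T_def .
qed

lemma indep_var_sqnorm_scaling_invariant:
  fixes I S :: "'i set"
  assumes I: "finite I" and SI: "S \<subseteq> I"
    and h: "h \<in> measurable (borel \<Otimes>\<^sub>M PiM (I - S) (\<lambda>_. std_normal_measure)) N1"
    and f: "f \<in> measurable (PiM S (\<lambda>_. lborel)) N2"
    and f_inv: "\<And>c y. c > 0 \<Longrightarrow> y \<in> space (PiM S (\<lambda>_. lborel)) \<Longrightarrow> f (scale_on S c y) = f y"
  shows "prob_space.indep_var (PiM I (\<lambda>_. std_normal_measure))
           N1 (\<lambda>g. h (sqnorm S g, restrict g (I - S))) N2 (\<lambda>g. f (restrict g S))"
proof -
  let ?G = "PiM I (\<lambda>_. std_normal_measure)"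
  define H where "H g = h (sqnorm S g, restrict g (I - S))" for g
  define F where "F g = f (restrict g S)" for g
  have H_meas: "H \<in> measurable ?G N1"
    unfolding H_def
    by (intro measurable_compose[OF _ h] measurable_Pair borel_measurable_sqnorm SI
        measurable_restrict_subset) auto
  have F_meas: "F \<in> measurable ?G N2"
    unfolding F_def by (intro measurable_compose[OF _ f] measurable_restrict_std_normal SI)
  have prod: "emeasure ?G {g \<in> space ?G. H g \<in> A \<and> F g \<in> B}
      = emeasure (PiM S (\<lambda>_. std_normal_measure)) {y \<in> space (PiM S (\<lambda>_. std_normal_measure)). f y \<in> B}
        * emeasure ?G {g \<in> space ?G. H g \<in> A \<and> F g \<in> space N2}"
    if "A \<in> sets N1" "B \<in> sets N2" for A B
    using emeasure_PiM_std_normal_factor_scaling_invariant[OF I SI h f f_inv that]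
    unfolding H_def F_def sqnorm_restrict[OF order_refl] .
  interpret G: prob_space ?G
    by (rule prob_space_PiM_std_normal)
  have "G.indep_var N1 H N2 F"
  proof (rule G.indep_varI_emeasure[OF H_meas F_meas])
    fix A B assume A: "A \<in> sets N1" and B: "B \<in> sets N2"
    have "{g \<in> space ?G. H g \<in> A} = {g \<in> space ?G. H g \<in> A \<and> F g \<in> space N2}"
      "{g \<in> space ?G. F g \<in> B} = {g \<in> space ?G. H g \<in> space N1 \<and> F g \<in> B}"
      "{g \<in> space ?G. H g \<in> space N1 \<and> F g \<in> space N2} = space ?G"
      using H_meas F_meas by (auto simp: measurable_space)
    then show "emeasure ?G {g \<in> space ?G. H g \<in> A \<and> F g \<in> B}
        = emeasure ?G {g \<in> space ?G. H g \<in> A} * emeasure ?G {g \<in> space ?G. F g \<in> B}"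
      using prod[OF A B] prod[OF sets.top B] by (simp add: G.emeasure_space_1 mult.commute)
  qed
  then show ?thesis
    unfolding H_def F_def .
qed

definition in_subtree :: "nat \<Rightarrow> nat \<Rightarrow> bool" where
  "in_subtree a j \<longleftrightarrow> (\<exists>m. a div 2 ^ m = j)"

lemma in_subtree_double: "in_subtree (2 * j) j"
  unfolding in_subtree_def by (rule exI[of _ 1]) simp

lemma in_subtree_trans: "in_subtree a b \<Longrightarrow> in_subtree b c \<Longrightarrow> in_subtree a c"
  unfolding in_subtree_def by (metis div_mult2_eq power_add)

lemma in_subtree_antisym:
  assumes "1 \<le> a" "in_subtree a b" "in_subtree b a"
  shows "a = b"
proof -
  obtain p q where p: "a div 2 ^ p = b" and q: "b div 2 ^ q = a"
    using assms(2,3) unfolding in_subtree_def by blast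
  then have a: "a div 2 ^ (p + q) = a"
    by (metis div_mult2_eq power_add)
  show ?thesis
  proof (cases "p + q = 0")
    case False
    then have "a div 2 ^ (p + q) < a"
      using assms(1) one_less_power[of "2::nat" "p + q"] by (intro div_less_dividend) auto
    then show ?thesis using a by simp
  qed (use p in simp)
qed

lemma in_subtree_linear:
  assumes "in_subtree l a" "in_subtree l b"
  shows "in_subtree a b \<or> in_subtree b a"
proof -
  obtain p q where p: "l div 2 ^ p = a" and q: "l div 2 ^ q = b"
    using assms unfolding in_subtree_def by blast
  show ?thesis
  proof (cases "p \<le> q")
    case True
    then have "a div 2 ^ (q - p) = b"
      using p q by (metis div_mult2_eq le_add_diff_inverse power_add)
    then show ?thesis unfolding in_subtree_def by blast
  next
    case False
    then have "b div 2 ^ (p - q) = a"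
      using p q by (metis div_mult2_eq le_add_diff_inverse nat_le_linear power_add)
    then show ?thesis unfolding in_subtree_def by blast
  qed
qed

lemma in_subtree_of_double:
  assumes "in_subtree (2 * i) j"
  shows "j = 2 * i \<or> in_subtree i j"
proof -
  obtain m where m: "(2 * i) div 2 ^ m = j"
    using assms unfolding in_subtree_def by blast
  show ?thesis
  proof (cases m)
    case (Suc d)
    then have "i div 2 ^ d = j"
      using m by (simp add: div_mult2_eq)
    then show ?thesis unfolding in_subtree_def by blast
  qed (use m in simp)
qed

definition subtree_coords :: "nat \<Rightarrow> nat \<Rightarrow> nat set" where
  "subtree_coords n j = {k. k < n \<and> in_subtree (k + n) j}"

lemma subtree_coords_subset: "subtree_coords n j \<subseteq> {..<n}"
  unfolding subtree_coords_def by auto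

lemma finite_subtree_coords: "finite (subtree_coords n j)"
  using finite_subset[OF subtree_coords_subset] by blast

lemma subtree_coords_mono: "in_subtree a b \<Longrightarrow> subtree_coords n a \<subseteq> subtree_coords n b"
  unfolding subtree_coords_def using in_subtree_trans by blast

lemma subtree_coords_overlap:
  "subtree_coords n a \<inter> subtree_coords n b \<noteq> {} \<Longrightarrow> in_subtree a b \<or> in_subtree b a"
  unfolding subtree_coords_def using in_subtree_linear by blast

lemma subtree_coords_nested_or_disjoint:
  assumes "\<not> in_subtree i j" and "A = i \<or> A = 2 * i"
  shows "subtree_coords n j \<subseteq> subtree_coords n A \<or> subtree_coords n A \<inter> subtree_coords n j = {}"
  using assms subtree_coords_overlap[of n A j] subtree_coords_mono[of j A n]
    in_subtree_of_double[of i j] by auto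

lemma loader_r_eq_sqnorm: "loader_r n x j = sqnorm (subtree_coords n j) x"
proof -
  have "subtree_leaves n j = (\<lambda>k. k + n) ` subtree_coords n j"
  proof (intro equalityI subsetI)
    fix l assume "l \<in> subtree_leaves n j"
    then have "l - n \<in> subtree_coords n j" "l = (l - n) + n"
      unfolding subtree_leaves_def subtree_coords_def in_subtree_def by auto
    then show "l \<in> (\<lambda>k. k + n) ` subtree_coords n j" by blast
  qed (auto simp: subtree_leaves_def subtree_coords_def in_subtree_def)
  then show ?thesis
    unfolding loader_r_def sqnorm_def by (simp add: sum.reindex)
qed

lemma borel_measurable_arccos [measurable]: "arccos \<in> borel_measurable borel"
proof -
  \<comment> \<open>Outside [-1, 1], arccos is the description of an unsatisfiable predicate, hence constant.\<close>
  have "arccos = (\<lambda>x. if x \<in> {-1..1} then arccos x else arccos 2)"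
  proof
    fix x :: real
    have "cos y \<noteq> x" "cos y \<noteq> 2" if "x \<notin> {-1..1}" for y
      using that cos_le_one[of y] cos_ge_minus_one[of y] by force+
    then show "arccos x = (if x \<in> {-1..1} then arccos x else arccos 2)"
      by (simp add: arccos_def)
  qed
  also have "\<dots> \<in> borel_measurable borel"
    by (intro borel_measurable_continuous_on_if continuous_on_arccos' continuous_on_const) auto
  finally show ?thesis .
qed

lemma loader_theta_unit_normalize:
  "loader_theta n (unit_normalize n g) j
     = arccos (sqrt (sqnorm (subtree_coords n (2 * j)) g / sqnorm (subtree_coords n j) g))"
proof -
  let ?c = "sqnorm {..<n} g" and ?a = "sqnorm (subtree_coords n (2 * j)) g"
    and ?b = "sqnorm (subtree_coords n j) g"
  have normalize: "sqnorm C (unit_normalize n g) = sqnorm C g / ?c" for C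
    unfolding sqnorm_def unit_normalize_def
    by (simp add: power_divide sum_divide_distrib[symmetric] sum_nonneg)
  have ratio: "?a / ?c / (?b / ?c) = ?a / ?b"
  proof (cases "?c = 0")
    case True
    then have "?a \<le> 0"
      using sqnorm_mono[OF subtree_coords_subset] by (metis finite_lessThan)
    then show ?thesis
      using True sqnorm_nonneg[of _ g] by (simp add: order_antisym)
  qed simp
  show ?thesis
    unfolding loader_theta_def loader_r_eq_sqnorm normalize ratio ..
qed

lemma indep_loader_theta_not_in_subtree:
  assumes "\<not> in_subtree i j"
  shows "prob_space.indep_var (gaussian_vec n)
           borel (\<lambda>g. loader_theta n (unit_normalize n g) i)
           borel (\<lambda>g. loader_theta n (unit_normalize n g) j)"
proof -
  define S where "S = subtree_coords n j"
  define T where "T = {..<n} - S"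
  \<comment> \<open>\<open>r A\<close> recovers \<open>r(A)\<close> from \<open>q = |g\<^sub>S|\<^sup>2\<close> and the coordinates \<open>x\<close> outside \<open>S\<close>.\<close>
  define r where "r A q x = of_bool (S \<subseteq> subtree_coords n A) * q + sqnorm (subtree_coords n A - S) x"
    for A q x
  define h where "h p = arccos (sqrt (r (2 * i) (fst p) (snd p) / r i (fst p) (snd p)))" for p
  define f where "f y = arccos (sqrt (sqnorm (subtree_coords n (2 * j)) y / sqnorm S y))" for y
  have S_sub: "S \<subseteq> {..<n}" and S2_sub: "subtree_coords n (2 * j) \<subseteq> S"
    unfolding S_def using subtree_coords_subset subtree_coords_mono[OF in_subtree_double] by auto
  have r_split: "sqnorm (subtree_coords n A) g = r A (sqnorm S g) (restrict g T)"
    if "A = i \<or> A = 2 * i" for A g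
  proof -
    have "subtree_coords n A - S \<subseteq> T"
      unfolding T_def using subtree_coords_subset by blast
    then have "sqnorm (subtree_coords n A - S) (restrict g T) = sqnorm (subtree_coords n A - S) g"
      by (rule sqnorm_restrict)
    with sqnorm_split_nested_or_disjoint[OF finite_subtree_coords
        subtree_coords_nested_or_disjoint[OF assms that, of n, folded S_def]]
    show ?thesis
      unfolding r_def by simp
  qed
  have "prob_space.indep_var (PiM {..<n} (\<lambda>_. std_normal_measure))
      borel (\<lambda>g. h (sqnorm S g, restrict g ({..<n} - S))) borel (\<lambda>g. f (restrict g S))"
  proof (rule indep_var_sqnorm_scaling_invariant[OF finite_lessThan S_sub])
    have [measurable]: "sqnorm (subtree_coords n A - S) \<in> borel_measurable (PiM T (\<lambda>_. borel))" for A
      unfolding T_def using subtree_coords_subset by (intro borel_measurable_sqnorm) auto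
    show "h \<in> borel_measurable (borel \<Otimes>\<^sub>M PiM ({..<n} - S) (\<lambda>_. std_normal_measure))"
      unfolding h_def r_def T_def[symmetric] by measurable
    have [measurable]: "sqnorm S \<in> borel_measurable (PiM S (\<lambda>_. borel))"
      "sqnorm (subtree_coords n (2 * j)) \<in> borel_measurable (PiM S (\<lambda>_. borel))"
      using S2_sub by (auto intro: borel_measurable_sqnorm)
    show "f \<in> borel_measurable (PiM S (\<lambda>_. lborel))"
      unfolding f_def by measurable
    show "f (scale_on S c y) = f y" if "c > 0" for c y
      unfolding f_def using that S2_sub by (simp add: sqnorm_scale_on)
  qed
  moreover have "h (sqnorm S g, restrict g ({..<n} - S)) = loader_theta n (unit_normalize n g) i" for g
    unfolding h_def loader_theta_unit_normalize T_def[symmetric] by (simp add: r_split)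
  moreover have "f (restrict g S) = loader_theta n (unit_normalize n g) j" for g
    unfolding f_def loader_theta_unit_normalize S_def using S2_sub[unfolded S_def]
    by (simp add: sqnorm_restrict)
  ultimately show ?thesis
    unfolding gaussian_vec_def by simp
qed

theorem lemma3:
  fixes n i j :: nat
  assumes "\<exists>k. n = 2^k"
    and "1 \<le> i" and "i < n" and "1 \<le> j" and "j < n" and "i \<noteq> j"
  shows "prob_space.indep_var (gaussian_vec n)
           borel (\<lambda>g. loader_theta n (unit_normalize n g) i)
           borel (\<lambda>g. loader_theta n (unit_normalize n g) j)"
proof (cases "in_subtree i j")
  case True
  then have "\<not> in_subtree j i"
    using in_subtree_antisym assms(2,6) by blast
  then show ?thesis
    using indep_loader_theta_not_in_subtree prob_space.indep_var_commute prob_space_PiM_std_normal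
    unfolding gaussian_vec_def by blast
qed (rule indep_loader_theta_not_in_subtree)

end
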